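(* Let $(\mathcal{L},\mathcal{M},\hat{\mathcal{L}},\hat{\mathcal{M}})$ satisfy the Lax-Sato equations $\frac{\partial K}{\partial t_{mn}}=\{H_{mn},K\}$ for $K\in\{\mathcal{L},\mathcal{M},\hat{\mathcal{L}},\hat{\mathcal{M}}\}$ together with $\{\mathcal{L},\mathcal{M}\}=\{\hat{\mathcal{L}},\hat{\mathcal{M}}\}=1$. Then for all $i\ge 1$ and all $m+n\ge 1$, $$\frac{\partial \hat v_{i+1}}{\partial t_{mn}}=-\operatorname{res}\,\hat{\mathcal{L}}^{i}\,dH_{mn},\qquad \frac{\partial v_{i+1}}{\partial t_{mn}}=\operatorname{res}\,\mathcal{L}^{i}\,dH_{mn}.$$
   Context: Variables: $t=(t_{mn})$ with $m,n\in\mathbb{N}$, $m+n\ge 1$, $t_{10}\equiv z$, $t_{01}\equiv\hat z$; $p$ is a complex parameter. Poisson bracket: $\{A,B\}=\frac{\partial A}{\partial p}\frac{\partial B}{\partial z}-\frac{\partial A}{\partial z}\frac{\partial B}{\partial p}$. $\mathcal{L}=p+\sum_{i\le 0}f_i(t)p^i$, $\hat{\mathcal{L}}=\frac{u(t)}{p}+\sum_{i\ge 0}g_i(t)p^i$ are formal Laurent series in $p$. $(\cdot)_{>0}$, $(\cdot)_{\le 0}$ denote the parts with positive, resp. non-positive, powers of $p$. $H_{mn}=(\mathcal{L}^m)_{>0}+(\hat{\mathcal{L}}^n)_{\le 0}$. $\mathcal{M}=\sum_{m+n\ge 2}m\,t_{mn}\mathcal{L}^{m-1}+z+\sum_{i=1}^{\infty}v_{i+1}\mathcal{L}^{-i-1}$,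 $\hat{\mathcal{M}}=\sum_{m+n\ge 2}n\,t_{mn}\hat{\mathcal{L}}^{n-1}+\hat z+\sum_{i=1}^{\infty}\hat v_{i+1}\hat{\mathcal{L}}^{-i-1}$. Formal residue of a 1-form in $p$: $\operatorname{res}\sum_n a_np^n\,dp=a_{-1}$; here $dH_{mn}$ means $\frac{\partial H_{mn}}{\partial p}dp$, so $\operatorname{res}\,A\,dH_{mn}$ is the coefficient of $p^{-1}$ in $A\,\partial_pH_{mn}$. *)

theory Defs
  imports "HOL-Analysis.Analysis"
begin

text \<open>Times: t :: (nat \<times> nat) \<Rightarrow> complex, with z = t(1,0), zhat = t(0,1).
  A (pointwise-in-t) formal Laurent series in p is a coefficient function
  int \<Rightarrow> complex (value at k = coefficient of p^k); a t-dependent series is a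
  function tm \<Rightarrow> ser.\<close>

type_synonym tm = "nat \<times> nat \<Rightarrow> complex"
type_synonym ser = "int \<Rightarrow> complex"
type_synonym fser = "tm \<Rightarrow> ser"

definition fin_times :: "tm \<Rightarrow> bool" where
  "fin_times t \<longleftrightarrow> finite {x. t x \<noteq> 0}"

definition lmul :: "ser \<Rightarrow> ser \<Rightarrow> ser" where
  "lmul a b = (\<lambda>k. infsum (\<lambda>j. a j * b (k - j)) UNIV)"

definition sone :: ser where
  "sone = (\<lambda>k. if k = 0 then 1 else 0)"

primrec spow :: "ser \<Rightarrow> nat \<Rightarrow> ser" where
  "spow a 0 = sone"
| "spow a (Suc n) = lmul a (spow a n)"

definition sinv_up :: "ser \<Rightarrow> ser" where
  "sinv_up a = (THE b. (\<exists>N. \<forall>k>N. b k = 0) \<and> lmul b a = sone)"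

definition sinv_down :: "ser \<Rightarrow> ser" where
  "sinv_down a = (THE b. (\<exists>N. \<forall>k<N. b k = 0) \<and> lmul b a = sone)"

definition dp :: "ser \<Rightarrow> ser" where
  "dp a = (\<lambda>k. of_int (k + 1) * a (k + 1))"

definition spos :: "ser \<Rightarrow> ser" where
  "spos a = (\<lambda>k. if k > 0 then a k else 0)"

definition snonpos :: "ser \<Rightarrow> ser" where
  "snonpos a = (\<lambda>k. if k \<le> 0 then a k else 0)"

definition sres :: "ser \<Rightarrow> complex" where
  "sres a = a (-1)"

definition pdt :: "nat \<times> nat \<Rightarrow> fser \<Rightarrow> tm \<Rightarrow> ser" where
  "pdt mn F t = (\<lambda>k. deriv (\<lambda>s. F (t(mn := s)) k) (t mn))"

definition pbr :: "fser \<Rightarrow> fser \<Rightarrow> fser" where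
  "pbr A B t = (\<lambda>k. lmul (dp (A t)) (pdt (1,0) B t) k
                   - lmul (pdt (1,0) A t) (dp (B t)) k)"

definition Lop :: "(int \<Rightarrow> tm \<Rightarrow> complex) \<Rightarrow> fser" where
  "Lop f t = (\<lambda>k. if k = 1 then 1 else if k \<le> 0 then f k t else 0)"

definition Lhop :: "(tm \<Rightarrow> complex) \<Rightarrow> (int \<Rightarrow> tm \<Rightarrow> complex) \<Rightarrow> fser" where
  "Lhop u g t = (\<lambda>k. if k = -1 then u t else if k \<ge> 0 then g k t else 0)"

definition Hop :: "fser \<Rightarrow> fser \<Rightarrow> nat \<Rightarrow> nat \<Rightarrow> fser" where
  "Hop L Lh m n t = (\<lambda>k. spos (spow (L t) m) k + snonpos (spow (Lh t) n) k)"

definition Mop :: "fser \<Rightarrow> (nat \<Rightarrow> tm \<Rightarrow> complex) \<Rightarrow> fser" where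
  "Mop L v t = (\<lambda>k.
     infsum (\<lambda>(m,n). of_nat m * t (m,n) * spow (L t) (m - 1) k) {(m,n). m + n \<ge> 2}
     + (if k = 0 then t (1,0) else 0)
     + infsum (\<lambda>i. v (i + 1) t * spow (sinv_up (L t)) (i + 1) k) {1..})"

definition Mhop :: "fser \<Rightarrow> (nat \<Rightarrow> tm \<Rightarrow> complex) \<Rightarrow> fser" where
  "Mhop Lh vh t = (\<lambda>k.
     infsum (\<lambda>(m,n). of_nat n * t (m,n) * spow (Lh t) (n - 1) k) {(m,n). m + n \<ge> 2}
     + (if k = 0 then t (0,1) else 0)
     + infsum (\<lambda>i. vh (i + 1) t * spow (sinv_down (Lh t)) (i + 1) k) {1..})"

definition lax_eq :: "fser \<Rightarrow> fser \<Rightarrow> fser \<Rightarrow> bool" where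
  "lax_eq L Lh K \<longleftrightarrow> (\<forall>t m n k. fin_times t \<longrightarrow> m + n \<ge> 1 \<longrightarrow>
      ((\<lambda>s. K (t((m,n) := s)) k) has_field_derivative pbr (Hop L Lh m n) K t k) (at (t (m,n))))"

end

theory Submission
  imports Defs "HOL-Computational_Algebra.Formal_Laurent_Series"
begin

unbundle fps_syntax

text \<open>Write \<open>res\<close> for the coefficient of \<open>p\<^sup>-\<^sup>1\<close>. As \<open>L\<close> has order \<open>-1\<close> in \<open>1/p\<close> and \<open>Lh\<close> has
  order \<open>-1\<close> in \<open>p\<close>, every term of \<open>M L\<^sup>i dL\<close> is exact except \<open>v\<^sub>i\<^sub>+\<^sub>1 L\<^sup>-\<^sup>1 dL\<close>, so
  \<open>v\<^sub>i\<^sub>+\<^sub>1 = res (M L\<^sup>i dL)\<close>, and likewise \<open>vh\<^sub>i\<^sub>+\<^sub>1 = - res (Mh Lh\<^sup>i dLh)\<close>.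
  Along \<open>t\<^sub>m\<^sub>n\<close> the Lax equations and \<open>{L, M} = 1\<close> give \<open>L\<^sub>p \<partial>M - M\<^sub>p \<partial>L = H\<^sub>p\<close>, hence
  \<open>\<partial>(M L\<^sup>i L\<^sub>p) = L\<^sup>i H\<^sub>p + \<partial>\<^sub>p (M L\<^sup>i \<partial>L)\<close>, and the exact second term has no residue.
  Series in \<open>1/p\<close> are treated as formal Laurent series in \<open>q = 1/p\<close> by reflecting exponents.\<close>

section \<open>Coefficients and residues of formal Laurent series\<close>

lemma fls_times_nth_interval:
  fixes f g :: "'a::comm_ring_1 fls"
  assumes f0: "\<And>k. k < a \<Longrightarrow> f $$ k = 0" and g0: "\<And>k. k < b \<Longrightarrow> g $$ k = 0"
  shows "(f * g) $$ n = (\<Sum>j\<in>{a..n-b}. f $$ j * g $$ (n - j))"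
proof (cases "f = 0 \<or> g = 0")
  case True
  then show ?thesis by auto
next
  case False
  then have "a \<le> fls_subdegree f" and "b \<le> fls_subdegree g"
    using f0 g0 by (auto intro: fls_subdegree_geI)
  then have "(\<Sum>i=fls_subdegree f..n - fls_subdegree g. f $$ i * g $$ (n - i))
      = (\<Sum>j\<in>{a..n-b}. f $$ j * g $$ (n - j))"
    by (intro sum.mono_neutral_left) (auto simp: fls_eq0_below_subdegree)
  then show ?thesis
    by (simp add: fls_times_nth(2))
qed

lemma fls_times_nth_eq_0:
  fixes f g :: "'a::comm_ring_1 fls"
  assumes "\<And>k. k < a \<Longrightarrow> f $$ k = 0" "\<And>k. k < b \<Longrightarrow> g $$ k = 0" "n < a + b"
  shows "(f * g) $$ n = 0"
  using fls_times_nth_interval[of a f b g n] assms by simp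

lemma fls_times_nth_cong:
  fixes f g h :: "'a::comm_ring_1 fls"
  assumes "\<And>j. j \<le> n - b \<Longrightarrow> f $$ j = g $$ j" "\<And>k. k < b \<Longrightarrow> h $$ k = 0"
  shows "(f * h) $$ n = (g * h) $$ n"
proof -
  have "((f - g) * h) $$ n = 0"
    by (rule fls_times_nth_eq_0[where a = "n - b + 1" and b = b]) (use assms in auto)
  then show ?thesis
    by (simp add: algebra_simps)
qed

lemma fls_power_nth_eq_0_below:
  fixes f :: "'a::comm_ring_1 fls"
  assumes "\<And>k. k < a \<Longrightarrow> f $$ k = 0" "k < int n * a"
  shows "(f ^ n) $$ k = 0"
  using assms(2)
proof (induction n arbitrary: k)
  case 0
  then show ?case
    by simp
next
  case (Suc n)
  then show ?case
    unfolding power_Suc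
    by (intro fls_times_nth_eq_0[where a = a and b = "int n * a"] assms(1)) (auto simp: algebra_simps)
qed

lemma fls_residue_power_times_deriv:
  fixes f :: "'a::field_char_0 fls"
  shows "(f ^ j * fls_deriv f) $$ (-1) = 0"
proof -
  have "(of_nat (Suc j) * (f ^ j * fls_deriv f)) $$ (-1) = 0"
    using fls_deriv_residue[of "f ^ Suc j"] by (simp only: fls_deriv_power) (simp add: algebra_simps)
  then show ?thesis
    by (simp only: fls_mult_of_nat_nth mult_eq_0_iff of_nat_eq_0_iff) simp
qed

lemma fls_residue_inverse_power_times_deriv:
  fixes f :: "'a::field_char_0 fls"
  assumes "j \<ge> 2"
  shows "(inverse f ^ j * fls_deriv f) $$ (-1) = 0"
proof -
  obtain k where k: "j = Suc (Suc k)"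
    using assms by (metis add_2_eq_Suc le_Suc_ex)
  have "fls_deriv (inverse f ^ Suc k) = - (of_nat (Suc k) * (inverse f ^ j * fls_deriv f))"
    by (simp only: fls_deriv_power fls_inverse_deriv k) (simp add: algebra_simps power2_eq_square)
  with fls_deriv_residue[of "inverse f ^ Suc k"] show ?thesis
    by (simp only: fls_uminus_nth neg_equal_0_iff_equal fls_mult_of_nat_nth mult_eq_0_iff
        of_nat_eq_0_iff) simp
qed

lemma fls_inverse_power_times_power:
  fixes f :: "'a::field fls"
  assumes "f \<noteq> 0"
  shows "inverse f ^ a * f ^ b = (if a \<le> b then f ^ (b - a) else inverse f ^ (a - b))"
proof (cases "a \<le> b")
  case True
  then obtain d where "b = a + d"
    using le_Suc_ex by blast
  with assms show ?thesis
    by (simp add: power_add power_inverse field_simps)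
next
  case False
  then obtain d where "a = b + d"
    using le_Suc_ex by (metis nat_le_linear)
  with assms False show ?thesis
    by (simp add: power_add power_inverse field_simps)
qed

lemma fls_residue_inverse_power_times_power_deriv:
  fixes f :: "'a::field_char_0 fls"
  assumes "f \<noteq> 0"
  shows "(inverse f ^ b * f ^ a * fls_deriv f) $$ (-1)
    = (if b = a + 1 then of_int (fls_subdegree f) else 0)"
proof (cases "b \<le> a")
  case True
  then show ?thesis
    using fls_inverse_power_times_power[OF assms, of b a] fls_residue_power_times_deriv[of f "a - b"]
    by simp
next
  case False
  then have pow: "inverse f ^ b * f ^ a = inverse f ^ (b - a)"
    using fls_inverse_power_times_power[OF assms] by simp
  show ?thesis
  proof (cases "b = a + 1")
    case True
    then have "inverse f ^ b * f ^ a * fls_deriv f = inverse f * fls_deriv f"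
      using pow by simp
    moreover have "(inverse f * fls_deriv f) $$ (-1) = of_int (fls_subdegree f)"
      using fls_residue_deriv_times_inverse_eq_subdegree(2)[of f] by simp
    ultimately show ?thesis
      using True by (simp only: refl if_True)
  next
    case False
    with \<open>\<not> b \<le> a\<close> have "b - a \<ge> 2"
      by auto
    with pow False show ?thesis
      using fls_residue_inverse_power_times_deriv[of "b - a" f] by simp
  qed
qed

section \<open>Coefficientwise derivatives of families of Laurent series\<close>

text \<open>The uniform lower bound on the orders makes every coefficient of a product a finite sum of
  products of coefficients, so the product rule holds coefficientwise.\<close>
definition has_fls_derivative :: "(complex \<Rightarrow> complex fls) \<Rightarrow> complex fls \<Rightarrow> complex \<Rightarrow> bool" where
  "has_fls_derivative F F' x \<longleftrightarrow> (\<exists>N. \<forall>s k. k < N \<longrightarrow> F s $$ k = 0) \<and>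
     (\<forall>k. ((\<lambda>s. F s $$ k) has_field_derivative F' $$ k) (at x))"

lemma has_fls_derivative_nth:
  "has_fls_derivative F F' x \<Longrightarrow> ((\<lambda>s. F s $$ k) has_field_derivative F' $$ k) (at x)"
  unfolding has_fls_derivative_def by auto

lemma has_fls_derivative_bounded:
  assumes "has_fls_derivative F F' x"
  obtains N where "\<And>s k. k < N \<Longrightarrow> F s $$ k = 0" and "\<And>k. k < N \<Longrightarrow> F' $$ k = 0"
proof -
  obtain N where N: "\<And>s k. k < N \<Longrightarrow> F s $$ k = 0"
    using assms unfolding has_fls_derivative_def by auto
  have "F' $$ k = 0" if "k < N" for k
  proof -
    have "((\<lambda>s. 0) has_field_derivative F' $$ k) (at x)"
      using has_fls_derivative_nth[OF assms, of k] N[OF that] by simp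
    then show ?thesis
      using DERIV_const DERIV_unique by blast
  qed
  with N that show ?thesis
    by blast
qed

lemma has_fls_derivative_const: "has_fls_derivative (\<lambda>s. c) 0 x"
  unfolding has_fls_derivative_def
  by (auto intro!: exI[of _ "fls_subdegree c"] simp: fls_eq0_below_subdegree)

lemma has_fls_derivative_mult:
  assumes hF: "has_fls_derivative F F' x" and hG: "has_fls_derivative G G' x"
  shows "has_fls_derivative (\<lambda>s. F s * G s) (F' * G x + F x * G') x"
proof -
  obtain a where a: "\<And>s k. k < a \<Longrightarrow> F s $$ k = 0" "\<And>k. k < a \<Longrightarrow> F' $$ k = 0"
    using has_fls_derivative_bounded[OF hF] by blast
  obtain b where b: "\<And>s k. k < b \<Longrightarrow> G s $$ k = 0" "\<And>k. k < b \<Longrightarrow> G' $$ k = 0"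
    using has_fls_derivative_bounded[OF hG] by blast
  have "((\<lambda>s. (F s * G s) $$ k) has_field_derivative (F' * G x + F x * G') $$ k) (at x)" for k
  proof -
    have "((\<lambda>s. \<Sum>j\<in>{a..k-b}. F s $$ j * G s $$ (k - j)) has_field_derivative
        (\<Sum>j\<in>{a..k-b}. F' $$ j * G x $$ (k - j) + F x $$ j * G' $$ (k - j))) (at x)"
      by (intro DERIV_sum DERIV_cong[OF DERIV_mult[OF has_fls_derivative_nth[OF hF]
            has_fls_derivative_nth[OF hG]]]) (simp add: algebra_simps)
    then show ?thesis
      using a b by (simp add: fls_times_nth_interval[where a = a and b = b] sum.distrib)
  qed
  then show ?thesis
    unfolding has_fls_derivative_def using a b
    by (auto intro!: exI[of _ "a + b"] fls_times_nth_eq_0[where a = a and b = b])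
qed

lemma has_fls_derivative_power:
  assumes "has_fls_derivative F F' x"
  shows "has_fls_derivative (\<lambda>s. F s ^ n) (of_nat n * F x ^ (n - 1) * F') x"
proof (induction n)
  case 0
  then show ?case
    using has_fls_derivative_const[of 1 x] by simp
next
  case (Suc n)
  have "has_fls_derivative (\<lambda>s. F s * F s ^ n)
      (F' * F x ^ n + F x * (of_nat n * F x ^ (n - 1) * F')) x"
    by (rule has_fls_derivative_mult[OF assms Suc])
  moreover have "F' * F x ^ n + F x * (of_nat n * F x ^ (n - 1) * F')
      = of_nat (Suc n) * F x ^ (Suc n - 1) * F'"
    by (cases n) (simp_all add: algebra_simps)
  ultimately show ?case
    by simp
qed

lemma has_fls_derivative_fls_deriv:
  assumes "has_fls_derivative F F' x"
  shows "has_fls_derivative (\<lambda>s. fls_deriv (F s)) (fls_deriv F') x"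
proof -
  obtain N where N: "\<forall>s k. k < N \<longrightarrow> F s $$ k = 0"
    using assms unfolding has_fls_derivative_def by auto
  show ?thesis
    using assms N unfolding has_fls_derivative_def
    by (auto intro!: exI[of _ "N - 1"] derivative_eq_intros)
qed

text \<open>The \<open>s\<close>-derivative of \<open>\<mu> l\<^sup>i l'\<close> is \<open>l\<^sup>i \<eta>'\<close> plus the exact form
  \<open>(\<mu> l\<^sup>i dl/ds)'\<close>, whose residue vanishes.\<close>
lemma residue_power_times_deriv_flow:
  assumes hl: "has_fls_derivative l dl x" and hm: "has_fls_derivative \<mu> d\<mu> x"
    and bracket: "fls_deriv (l x) * d\<mu> - fls_deriv (\<mu> x) * dl = fls_deriv \<eta>"
  shows "((\<lambda>s. (\<mu> s * l s ^ i * fls_deriv (l s)) $$ (-1)) has_field_derivative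
           (l x ^ i * fls_deriv \<eta>) $$ (-1)) (at x)"
proof -
  let ?P = "(d\<mu> * l x ^ i + \<mu> x * (of_nat i * l x ^ (i - 1) * dl)) * fls_deriv (l x)
    + \<mu> x * l x ^ i * fls_deriv dl"
  have deriv: "has_fls_derivative (\<lambda>s. \<mu> s * l s ^ i * fls_deriv (l s)) ?P x"
    by (intro has_fls_derivative_mult has_fls_derivative_power has_fls_derivative_fls_deriv hl hm)
  have "fls_deriv (l x ^ i) = of_nat i * l x ^ (i - 1) * fls_deriv (l x)"
    by (rule fls_deriv_power)
  then have "?P = l x ^ i * (fls_deriv (l x) * d\<mu> - fls_deriv (\<mu> x) * dl)
      + fls_deriv (\<mu> x * l x ^ i * dl)"
    by (simp add: algebra_simps del: fls_deriv_power)
  then have "?P $$ (-1) = (l x ^ i * fls_deriv \<eta>) $$ (-1)"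
    by (simp only: bracket fls_plus_nth fls_deriv_residue add_0_right)
  with has_fls_derivative_nth[OF deriv, of "-1"] show ?thesis
    by simp
qed

text \<open>Only the terms with \<open>k \<le> i\<close> of the infinite sum reach the residue, and among them only
  \<open>w\<^sub>i l\<^sup>-\<^sup>1 dl\<close> contributes: \<open>res (l\<^sup>-\<^sup>1 dl)\<close> is the order \<open>-1\<close> of \<open>l\<close>.\<close>
lemma residue_extracts_inverse_power_coeff:
  fixes l \<mu> :: "complex fls"
  assumes deg: "fls_subdegree l = -1" and i: "i \<ge> 1"
    and \<mu>: "\<And>j. \<mu> $$ j = (\<Sum>a\<in>A. c a * (l ^ e a) $$ j)
      + infsum (\<lambda>k. w k * (inverse l ^ (k + 1)) $$ j) {1..}"
  shows "(\<mu> * l ^ i * fls_deriv l) $$ (-1) = - w i"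
proof -
  have l: "l \<noteq> 0"
    using deg by auto
  define T where "T = (\<Sum>a\<in>A. fls_const (c a) * l ^ e a)
    + (\<Sum>k\<in>{1..i}. fls_const (w k) * inverse l ^ (k + 1))"
  have W: "(l ^ i * fls_deriv l) $$ k = 0" if "k < - int i - 2" for k
  proof (rule fls_times_nth_eq_0[where a = "- int i" and b = "-2"])
    show "(l ^ i) $$ k = 0" if "k < - int i" for k
      using that by (intro fls_eq0_below_subdegree) (simp add: fls_subdegree_pow deg)
    show "fls_deriv l $$ k = 0" if "k < -2" for k
      using that fls_eq0_below_subdegree[of "k + 1" l] by (simp add: deg)
  qed (use that in simp)
  have "\<mu> $$ j = T $$ j" if "j \<le> -1 - (- int i - 2)" for j
  proof -
    have "infsum (\<lambda>k. w k * (inverse l ^ (k + 1)) $$ j) {1..}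
        = infsum (\<lambda>k. w k * (inverse l ^ (k + 1)) $$ j) {1..i}"
      using that
      by (intro infsum_cong_neutral) (auto intro!: fls_eq0_below_subdegree simp: fls_subdegree_pow l deg)
    then show ?thesis
      by (simp add: \<mu> T_def fls_nth_sum)
  qed
  then have "(\<mu> * l ^ i * fls_deriv l) $$ (-1) = (T * (l ^ i * fls_deriv l)) $$ (-1)"
    unfolding mult.assoc by (intro fls_times_nth_cong[where b = "- int i - 2"] W)
  also have "\<dots> = (\<Sum>a\<in>A. c a * (l ^ (e a + i) * fls_deriv l) $$ (-1))
      + (\<Sum>k\<in>{1..i}. w k * (inverse l ^ (k + 1) * l ^ i * fls_deriv l) $$ (-1))"
    unfolding T_def distrib_right sum_distrib_right
    by (simp only: fls_plus_nth fls_nth_sum fls_mult_const_nth power_add mult.assoc)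
  also have "\<dots> = (\<Sum>k\<in>{1..i}. if k = i then - w k else 0)"
  proof -
    have "w k * (inverse l ^ (k + 1) * l ^ i * fls_deriv l) $$ (-1) = (if k = i then - w k else 0)"
      for k
      by (simp only: fls_residue_inverse_power_times_power_deriv[OF l] deg) simp
    then show ?thesis
      by (simp only: fls_residue_power_times_deriv mult_zero_right sum.neutral_const add_0_left)
  qed
  also have "\<dots> = - w i"
    using i by simp
  finally show ?thesis .
qed

lemma inverse_power_expansion_nth_eq_0:
  fixes l :: "complex fls"
  assumes deg: "fls_subdegree l = -1" and E: "\<And>a. a \<in> A \<Longrightarrow> int (e a) \<le> E" "0 \<le> E"
    and j: "j < - E"
  shows "(\<Sum>a\<in>A. c a * (l ^ e a) $$ j) + infsum (\<lambda>k. w k * (inverse l ^ (k + 1)) $$ j) {1..} = 0"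
proof -
  have "(l ^ e a) $$ j = 0" if "a \<in> A" for a
    using E(1)[OF that] j by (intro fls_eq0_below_subdegree) (simp add: fls_subdegree_pow deg)
  moreover have "(inverse l ^ (k + 1)) $$ j = 0" for k
    using E(2) j by (intro fls_eq0_below_subdegree) (simp add: fls_subdegree_pow deg del: power_Suc)
  ultimately show ?thesis
    by simp
qed

section \<open>Series as coefficient functions\<close>

definition bounded_below :: "ser \<Rightarrow> bool" where
  "bounded_below a \<longleftrightarrow> (\<exists>N. \<forall>k<N. a k = 0)"

definition reflect :: "ser \<Rightarrow> ser" where
  "reflect a = (\<lambda>k. a (- k))"

lemma reflect_reflect [simp]: "reflect (reflect a) = a"
  by (simp add: reflect_def)

lemma reflect_apply: "reflect a k = a (- k)"
  by (simp add: reflect_def)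

lemma reflect_sone [simp]: "reflect sone = sone"
  by (auto simp: reflect_def sone_def)

lemma bounded_below_fls_nth [simp]: "bounded_below (fls_nth f)"
  unfolding bounded_below_def
  by (auto intro!: exI[of _ "fls_subdegree f"] simp: fls_eq0_below_subdegree)

lemma bounded_below_reflect: "(\<And>k. k > N \<Longrightarrow> a k = 0) \<Longrightarrow> bounded_below (reflect a)"
  unfolding bounded_below_def reflect_def by (auto intro!: exI[of _ "- N"])

lemma Abs_fls_fls_nth [simp]: "Abs_fls (fls_nth f) = f"
  by (rule fls.fls_nth_inverse)

lemma Abs_fls_nth: "bounded_below a \<Longrightarrow> Abs_fls a $$ k = a k"
  unfolding bounded_below_def by (rule nth_Abs_fls_ex_lower_bound)

lemma fls_nth_Abs_fls: "bounded_below a \<Longrightarrow> fls_nth (Abs_fls a) = a"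
  by (rule ext) (simp add: Abs_fls_nth)

lemma sone_eq: "sone = fls_nth 1"
  by (rule ext) (simp add: sone_def)

lemma Abs_fls_sone [simp]: "Abs_fls sone = 1"
  by (simp add: sone_eq)

lemma lmul_eq_fls_times:
  assumes "bounded_below a" "bounded_below b"
  shows "lmul a b = fls_nth (Abs_fls a * Abs_fls b)"
proof
  fix k
  obtain M where M: "\<forall>k<M. a k = 0"
    using assms(1) unfolding bounded_below_def by auto
  obtain N where N: "\<forall>k<N. b k = 0"
    using assms(2) unfolding bounded_below_def by auto
  have "lmul a b k = infsum (\<lambda>j. a j * b (k - j)) {M..k-N}"
    unfolding lmul_def by (rule infsum_cong_neutral) (use M N in auto)
  also have "\<dots> = (Abs_fls a * Abs_fls b) $$ k"
    using M N assms
    by (simp add: fls_times_nth_interval[where a = M and b = N] Abs_fls_nth)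
  finally show "lmul a b k = (Abs_fls a * Abs_fls b) $$ k" .
qed

lemma spow_eq_fls_power: "bounded_below a \<Longrightarrow> spow a n = fls_nth (Abs_fls a ^ n)"
  by (induction n) (simp_all add: sone_eq lmul_eq_fls_times)

lemma lmul_eq_sone_imp_eq_inverse:
  assumes "bounded_below b" "bounded_below a" "Abs_fls a \<noteq> 0" "lmul b a = sone"
  shows "b = fls_nth (inverse (Abs_fls a))"
proof -
  have "Abs_fls b * Abs_fls a = 1"
    using assms by (metis Abs_fls_fls_nth lmul_eq_fls_times sone_eq)
  then have "Abs_fls b = inverse (Abs_fls a)"
    using assms(3) by (metis inverse_unique mult.commute)
  then show ?thesis
    using assms(1) by (metis fls_nth_Abs_fls)
qed

lemma sinv_down_eq_fls_inverse:
  assumes "bounded_below a" "Abs_fls a \<noteq> 0"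
  shows "sinv_down a = fls_nth (inverse (Abs_fls a))"
  unfolding sinv_down_def
proof (rule the_equality)
  show "(\<exists>N. \<forall>k<N. fls_nth (inverse (Abs_fls a)) k = 0) \<and> lmul (fls_nth (inverse (Abs_fls a))) a = sone"
    using assms bounded_below_fls_nth[of "inverse (Abs_fls a)"]
    by (simp add: bounded_below_def lmul_eq_fls_times sone_eq)
next
  fix b
  assume "(\<exists>N. \<forall>k<N. b k = 0) \<and> lmul b a = sone"
  then show "b = fls_nth (inverse (Abs_fls a))"
    using assms by (intro lmul_eq_sone_imp_eq_inverse) (auto simp: bounded_below_def)
qed

lemma lmul_reflect: "lmul a b = reflect (lmul (reflect a) (reflect b))"
proof
  fix k
  have "lmul (reflect a) (reflect b) (- k) = infsum (\<lambda>j. (\<lambda>j. a j * b (k - j)) (- j)) UNIV"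
    unfolding lmul_def reflect_def by (simp add: add.commute)
  also have "\<dots> = infsum (\<lambda>j. a j * b (k - j)) UNIV"
    by (rule infsum_reindex_bij_betw) (auto simp: bij_betw_def inj_def image_def intro!: exI[of _ "- x" for x])
  finally show "lmul a b k = reflect (lmul (reflect a) (reflect b)) k"
    by (simp add: reflect_def lmul_def)
qed

lemma spow_reflect: "spow a n = reflect (spow (reflect a) n)"
  by (induction n) (simp_all, subst lmul_reflect, simp)

lemma sinv_up_eq_reflect_inverse:
  assumes "bounded_below (reflect a)" "Abs_fls (reflect a) \<noteq> 0"
  shows "sinv_up a = reflect (sinv_down (reflect a))"
proof -
  have "(\<exists>N. \<forall>k>N. b k = 0) \<and> lmul b a = sone \<longleftrightarrow>
      (\<exists>N. \<forall>k<N. reflect b k = 0) \<and> lmul (reflect b) (reflect a) = sone" for b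
  proof -
    have "(\<exists>N. \<forall>k>N. b k = 0) \<longleftrightarrow> (\<exists>N. \<forall>k<N. reflect b k = 0)"
      unfolding reflect_def by (metis minus_less_iff minus_minus)
    moreover have "lmul b a = sone \<longleftrightarrow> lmul (reflect b) (reflect a) = sone"
      by (metis lmul_reflect reflect_reflect reflect_sone)
    ultimately show ?thesis
      by blast
  qed
  then have "sinv_up a = (THE b. (\<exists>N. \<forall>k<N. reflect b k = 0) \<and> lmul (reflect b) (reflect a) = sone)"
    unfolding sinv_up_def by presburger
  also have "\<dots> = reflect (sinv_down (reflect a))"
  proof (rule the_equality)
    show "(\<exists>N. \<forall>k<N. reflect (reflect (sinv_down (reflect a))) k = 0)
        \<and> lmul (reflect (reflect (sinv_down (reflect a)))) (reflect a) = sone"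
      using assms by (simp add: sinv_down_eq_fls_inverse lmul_eq_fls_times sone_eq)
        (metis bounded_below_def bounded_below_fls_nth)
  next
    fix b
    assume "(\<exists>N. \<forall>k<N. reflect b k = 0) \<and> lmul (reflect b) (reflect a) = sone"
    then have "reflect b = fls_nth (inverse (Abs_fls (reflect a)))"
      using assms by (intro lmul_eq_sone_imp_eq_inverse) (auto simp: bounded_below_def)
    then have "reflect b = sinv_down (reflect a)"
      using assms by (simp add: sinv_down_eq_fls_inverse)
    then show "b = reflect (sinv_down (reflect a))"
      by (metis reflect_reflect)
  qed
  finally show ?thesis .
qed

lemma bounded_below_dp: "bounded_below a \<Longrightarrow> bounded_below (dp a)"
  unfolding bounded_below_def dp_def by (metis less_diff_eq mult_zero_right)

lemma Abs_fls_dp: "bounded_below a \<Longrightarrow> Abs_fls (dp a) = fls_deriv (Abs_fls a)"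
  by (rule fls_eqI) (simp add: Abs_fls_nth bounded_below_dp, simp add: dp_def)

lemma bounded_below_reflect_dp: "bounded_below (reflect a) \<Longrightarrow> bounded_below (reflect (dp a))"
proof -
  assume "bounded_below (reflect a)"
  then obtain N where N: "\<And>k. k < N \<Longrightarrow> a (- k) = 0"
    unfolding bounded_below_def reflect_def by auto
  have "reflect (dp a) k = 0" if "k < N + 1" for k
    using N[of "k - 1"] that by (simp add: dp_def reflect_def)
  then show ?thesis
    unfolding bounded_below_def by blast
qed

text \<open>In the variable \<open>q = 1/p\<close> of the reflected series, \<open>d/dp = - q\<^sup>2 d/dq\<close>.\<close>
lemma Abs_fls_reflect_dp:
  assumes "bounded_below (reflect a)"
  shows "Abs_fls (reflect (dp a)) = - (fls_X ^ 2 * fls_deriv (Abs_fls (reflect a)))"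
proof (rule fls_eqI)
  fix k
  show "Abs_fls (reflect (dp a)) $$ k = (- (fls_X ^ 2 * fls_deriv (Abs_fls (reflect a)))) $$ k"
    using Abs_fls_nth[OF assms] Abs_fls_nth[OF bounded_below_reflect_dp[OF assms]]
    by (simp add: fls_X_power_times_conv_shift(1) dp_def reflect_def algebra_simps)
qed

lemma Abs_fls_pbr:
  assumes "bounded_below (A t)" "bounded_below (B t)"
    and "bounded_below (pdt (1,0) A t)" "bounded_below (pdt (1,0) B t)"
  shows "Abs_fls (pbr A B t) = fls_deriv (Abs_fls (A t)) * Abs_fls (pdt (1,0) B t)
    - Abs_fls (pdt (1,0) A t) * fls_deriv (Abs_fls (B t))"
proof -
  have "pbr A B t = fls_nth (Abs_fls (dp (A t)) * Abs_fls (pdt (1,0) B t)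
      - Abs_fls (pdt (1,0) A t) * Abs_fls (dp (B t)))"
    using assms by (auto simp: pbr_def lmul_eq_fls_times bounded_below_dp)
  then show ?thesis
    using assms by (simp add: Abs_fls_dp)
qed

lemma Abs_fls_reflect_pbr:
  assumes "bounded_below (reflect (A t))" "bounded_below (reflect (B t))"
    and "bounded_below (reflect (pdt (1,0) A t))" "bounded_below (reflect (pdt (1,0) B t))"
  shows "Abs_fls (reflect (pbr A B t)) = - (fls_X ^ 2) *
    (fls_deriv (Abs_fls (reflect (A t))) * Abs_fls (reflect (pdt (1,0) B t))
      - Abs_fls (reflect (pdt (1,0) A t)) * fls_deriv (Abs_fls (reflect (B t))))"
proof -
  have "reflect (pbr A B t) = fls_nth (Abs_fls (reflect (dp (A t))) * Abs_fls (reflect (pdt (1,0) B t))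
      - Abs_fls (reflect (pdt (1,0) A t)) * Abs_fls (reflect (dp (B t))))"
  proof -
    have "lmul (dp (A t)) (pdt (1,0) B t)
        = reflect (fls_nth (Abs_fls (reflect (dp (A t))) * Abs_fls (reflect (pdt (1,0) B t))))"
      by (subst lmul_reflect) (simp only: lmul_eq_fls_times bounded_below_reflect_dp assms)
    moreover have "lmul (pdt (1,0) A t) (dp (B t))
        = reflect (fls_nth (Abs_fls (reflect (pdt (1,0) A t)) * Abs_fls (reflect (dp (B t)))))"
      by (subst lmul_reflect) (simp only: lmul_eq_fls_times bounded_below_reflect_dp assms)
    ultimately show ?thesis
      unfolding pbr_def by (auto simp: reflect_def)
  qed
  then show ?thesis
    using assms by (simp add: Abs_fls_reflect_dp algebra_simps)
qed

lemma sres_lmul_dp: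
  assumes "bounded_below a" "bounded_below b"
  shows "sres (lmul a (dp b)) = (Abs_fls a * fls_deriv (Abs_fls b)) $$ (-1)"
  using assms by (simp add: sres_def lmul_eq_fls_times bounded_below_dp Abs_fls_dp)

lemma sres_lmul_dp_reflect:
  assumes "bounded_below (reflect a)" "bounded_below (reflect b)"
  shows "sres (lmul a (dp b)) = - (Abs_fls (reflect a) * fls_deriv (Abs_fls (reflect b))) $$ (-1)"
proof -
  have "sres (lmul a (dp b)) = (Abs_fls (reflect a) * Abs_fls (reflect (dp b))) $$ 1"
    using assms
    by (subst lmul_reflect) (simp add: sres_def reflect_apply lmul_eq_fls_times bounded_below_reflect_dp)
  also have "\<dots> = - (fls_X ^ 2 * (Abs_fls (reflect a) * fls_deriv (Abs_fls (reflect b)))) $$ 1"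
    using assms by (simp add: Abs_fls_reflect_dp algebra_simps)
  finally show ?thesis
    by (simp add: fls_X_power_times_conv_shift(1))
qed

section \<open>The Lax flow on coefficients\<close>

text \<open>The Lax flow \<open>\<partial>K = c (H\<^sub>p K\<^sub>z - H\<^sub>z K\<^sub>p)\<close> with \<open>c (L\<^sub>p M\<^sub>z - L\<^sub>z M\<^sub>p) = 1\<close> gives
  \<open>L\<^sub>p \<partial>M - M\<^sub>p \<partial>L = H\<^sub>p\<close>.\<close>
lemma flow_bracket_identity:
  fixes c :: "'a::comm_ring_1"
  assumes "dl = c * (D\<eta> * lz - \<eta>z * Dl)" "d\<mu> = c * (D\<eta> * \<mu>z - \<eta>z * D\<mu>)"
    and "c * (Dl * \<mu>z - lz * D\<mu>) = 1"
  shows "Dl * d\<mu> - D\<mu> * dl = D\<eta>"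
proof -
  have "Dl * d\<mu> - D\<mu> * dl = D\<eta> * (c * (Dl * \<mu>z - lz * D\<mu>))"
    unfolding assms(1,2) by (simp add: algebra_simps)
  then show ?thesis
    using assms(3) by simp
qed

lemma pbr_flow_identity:
  assumes "bounded_below (A t)" "bounded_below (pdt (1,0) A t)"
    and "bounded_below (B t)" "bounded_below (pdt (1,0) B t)"
    and "bounded_below (C t)" "bounded_below (pdt (1,0) C t)"
    and "pbr B C t = sone"
  shows "fls_deriv (Abs_fls (B t)) * Abs_fls (pbr A C t) - fls_deriv (Abs_fls (C t)) * Abs_fls (pbr A B t)
    = fls_deriv (Abs_fls (A t))"
proof (rule flow_bracket_identity[where c = 1])
  show "Abs_fls (pbr A B t) = 1 * (fls_deriv (Abs_fls (A t)) * Abs_fls (pdt (1,0) B t)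
      - Abs_fls (pdt (1,0) A t) * fls_deriv (Abs_fls (B t)))"
    using assms by (simp add: Abs_fls_pbr)
  show "Abs_fls (pbr A C t) = 1 * (fls_deriv (Abs_fls (A t)) * Abs_fls (pdt (1,0) C t)
      - Abs_fls (pdt (1,0) A t) * fls_deriv (Abs_fls (C t)))"
    using assms by (simp add: Abs_fls_pbr)
  show "1 * (fls_deriv (Abs_fls (B t)) * Abs_fls (pdt (1,0) C t)
      - Abs_fls (pdt (1,0) B t) * fls_deriv (Abs_fls (C t))) = 1"
    using assms Abs_fls_pbr[of B t C] by simp
qed

lemma reflect_pbr_flow_identity:
  assumes "bounded_below (reflect (A t))" "bounded_below (reflect (pdt (1,0) A t))"
    and "bounded_below (reflect (B t))" "bounded_below (reflect (pdt (1,0) B t))"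
    and "bounded_below (reflect (C t))" "bounded_below (reflect (pdt (1,0) C t))"
    and "pbr B C t = sone"
  shows "fls_deriv (Abs_fls (reflect (B t))) * Abs_fls (reflect (pbr A C t))
      - fls_deriv (Abs_fls (reflect (C t))) * Abs_fls (reflect (pbr A B t))
    = fls_deriv (Abs_fls (reflect (A t)))"
proof (rule flow_bracket_identity[where c = "- (fls_X ^ 2)"])
  show "Abs_fls (reflect (pbr A B t)) = - (fls_X ^ 2) *
      (fls_deriv (Abs_fls (reflect (A t))) * Abs_fls (reflect (pdt (1,0) B t))
        - Abs_fls (reflect (pdt (1,0) A t)) * fls_deriv (Abs_fls (reflect (B t))))"
    using assms by (simp add: Abs_fls_reflect_pbr)
  show "Abs_fls (reflect (pbr A C t)) = - (fls_X ^ 2) *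
      (fls_deriv (Abs_fls (reflect (A t))) * Abs_fls (reflect (pdt (1,0) C t))
        - Abs_fls (reflect (pdt (1,0) A t)) * fls_deriv (Abs_fls (reflect (C t))))"
    using assms by (simp add: Abs_fls_reflect_pbr)
  show "- (fls_X ^ 2) * (fls_deriv (Abs_fls (reflect (B t))) * Abs_fls (reflect (pdt (1,0) C t))
      - Abs_fls (reflect (pdt (1,0) B t)) * fls_deriv (Abs_fls (reflect (C t)))) = 1"
    using assms Abs_fls_reflect_pbr[of B t C] by simp
qed

lemma pdt_eq_0: "(\<And>s. B (t(mn := s)) k = 0) \<Longrightarrow> pdt mn B t k = 0"
  unfolding pdt_def by simp

lemma lax_eq_has_fls_derivative:
  fixes \<sigma> :: "int \<Rightarrow> int"
  assumes lax: "lax_eq L Lh K" and t: "fin_times t" and mn: "m + n \<ge> 1"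
    and bound: "\<And>s k. k < N \<Longrightarrow> K (t((m,n) := s)) (\<sigma> k) = 0"
  shows "has_fls_derivative (\<lambda>s. Abs_fls (\<lambda>k. K (t((m,n) := s)) (\<sigma> k)))
    (Abs_fls (\<lambda>k. pbr (Hop L Lh m n) K t (\<sigma> k))) (t (m,n))"
proof -
  have deriv: "((\<lambda>s. K (t((m,n) := s)) (\<sigma> k)) has_field_derivative pbr (Hop L Lh m n) K t (\<sigma> k))
      (at (t (m,n)))" for k
    using lax t mn unfolding lax_eq_def by blast
  have "pbr (Hop L Lh m n) K t (\<sigma> k) = 0" if "k < N" for k
  proof -
    have "((\<lambda>s. 0) has_field_derivative pbr (Hop L Lh m n) K t (\<sigma> k)) (at (t (m,n)))"
      using deriv[of k] bound[OF that] by simp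
    then show ?thesis
      using DERIV_const DERIV_unique by blast
  qed
  then have bb: "bounded_below (\<lambda>k. pbr (Hop L Lh m n) K t (\<sigma> k))"
    unfolding bounded_below_def by blast
  have bbs: "bounded_below (\<lambda>k. K (t((m,n) := s)) (\<sigma> k))" for s
    unfolding bounded_below_def using bound by blast
  show ?thesis
    unfolding has_fls_derivative_def
  proof (intro conjI allI)
    show "\<exists>N. \<forall>s k. k < N \<longrightarrow> Abs_fls (\<lambda>k. K (t((m,n) := s)) (\<sigma> k)) $$ k = 0"
      using bound by (auto simp: Abs_fls_nth[OF bbs])
    show "((\<lambda>s. Abs_fls (\<lambda>k. K (t((m,n) := s)) (\<sigma> k)) $$ k) has_field_derivative
        Abs_fls (\<lambda>k. pbr (Hop L Lh m n) K t (\<sigma> k)) $$ k) (at (t (m,n)))" for k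
      by (simp only: Abs_fls_nth[OF bbs] Abs_fls_nth[OF bb] deriv)
  qed
qed

lemma fin_times_upd: "fin_times t \<Longrightarrow> fin_times (t(x := s))"
  unfolding fin_times_def by (rule finite_subset[of _ "{x. t x \<noteq> 0} \<union> {x}"]) auto

section \<open>The operators \<open>L\<close> and \<open>M\<close>\<close>

definition L_fls :: "(int \<Rightarrow> tm \<Rightarrow> complex) \<Rightarrow> tm \<Rightarrow> complex fls" where
  "L_fls f t = Abs_fls (reflect (Lop f t))"

lemma bounded_below_reflect_Lop: "bounded_below (reflect (Lop f t))"
  by (rule bounded_below_reflect[of 1]) (simp add: Lop_def)

lemma L_fls_nth: "L_fls f t $$ k = Lop f t (- k)"
  by (simp add: L_fls_def Abs_fls_nth bounded_below_reflect_Lop reflect_apply)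

lemma L_fls_subdegree: "fls_subdegree (L_fls f t) = -1"
  by (rule fls_subdegree_eqI) (auto simp: L_fls_nth Lop_def)

lemma spow_Lop: "spow (Lop f t) j k = (L_fls f t ^ j) $$ (- k)"
  by (subst spow_reflect) (simp add: spow_eq_fls_power bounded_below_reflect_Lop L_fls_def reflect_apply)

lemma reflect_spow_Lop: "reflect (spow (Lop f t) j) = fls_nth (L_fls f t ^ j)"
  by (rule ext) (simp add: spow_Lop reflect_apply)

lemma spow_sinv_up_Lop: "spow (sinv_up (Lop f t)) j k = (inverse (L_fls f t) ^ j) $$ (- k)"
proof -
  have "L_fls f t \<noteq> 0"
    using L_fls_subdegree[of f t] by auto
  then have "sinv_up (Lop f t) = reflect (fls_nth (inverse (L_fls f t)))"
    by (simp add: sinv_up_eq_reflect_inverse sinv_down_eq_fls_inverse bounded_below_reflect_Lop L_fls_def)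
  then show ?thesis
    by (subst spow_reflect) (simp add: spow_eq_fls_power reflect_apply)
qed

lemma Hop_Lop_eq_0: "k > int m \<Longrightarrow> Hop (Lop f) Lh m n t k = 0"
  unfolding Hop_def spos_def snonpos_def spow_Lop
  by (simp add: fls_eq0_below_subdegree fls_subdegree_pow L_fls_subdegree)

text \<open>The term \<open>z\<close> of \<open>M\<close> is the summand \<open>m t\<^sub>m\<^sub>n L\<^sup>m\<^sup>-\<^sup>1\<close> for \<open>(m, n) = (1, 0)\<close>.\<close>
lemma Mop_nth:
  assumes "fin_times t"
  shows "Mop (Lop f) v t k =
    (\<Sum>x\<in>insert (1,0) {x. t x \<noteq> 0 \<and> 2 \<le> fst x + snd x}.
      of_nat (fst x) * t x * (L_fls f t ^ (fst x - 1)) $$ (- k))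
    + infsum (\<lambda>i. v (i + 1) t * (inverse (L_fls f t) ^ (i + 1)) $$ (- k)) {1..}"
proof -
  let ?F = "{x. t x \<noteq> 0 \<and> 2 \<le> fst x + snd x}"
  have fin: "finite ?F"
    using assms unfolding fin_times_def by (rule finite_subset[rotated]) auto
  have "infsum (\<lambda>(m,n). of_nat m * t (m,n) * spow (Lop f t) (m - 1) k) {(m,n). m + n \<ge> 2}
      = infsum (\<lambda>x. of_nat (fst x) * t x * (L_fls f t ^ (fst x - 1)) $$ (- k)) ?F"
    by (rule infsum_cong_neutral) (auto simp: spow_Lop)
  then show ?thesis
    using fin unfolding Mop_def spow_sinv_up_Lop by simp
qed

lemma Mop_eq_0:
  assumes "fin_times t" "{x. t x \<noteq> 0} \<subseteq> S" "finite S" "k > (\<Sum>x\<in>S. int (fst x))"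
  shows "Mop (Lop f) v t k = 0"
  unfolding Mop_nth[OF assms(1)]
proof (rule inverse_power_expansion_nth_eq_0[OF L_fls_subdegree])
  show "0 \<le> (\<Sum>x\<in>S. int (fst x))"
    by (simp add: sum_nonneg)
  show "int (fst a - 1) \<le> (\<Sum>x\<in>S. int (fst x))"
    if "a \<in> insert (1,0) {x. t x \<noteq> 0 \<and> 2 \<le> fst x + snd x}" for a
  proof -
    have "a = (1,0) \<or> a \<in> S"
      using that assms(2) by auto
    then show ?thesis
      using assms(3) member_le_sum[of a S "\<lambda>x. int (fst x)"] by (auto simp: sum_nonneg)
  qed
qed (use assms(4) in simp)

lemma Mop_upd_eq_0:
  assumes "fin_times t" "y \<in> Y" "finite Y" "k > (\<Sum>x\<in>{x. t x \<noteq> 0} \<union> Y. int (fst x))"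
  shows "Mop (Lop f) v (t(y := s)) k = 0"
  using assms by (intro Mop_eq_0[OF fin_times_upd[OF assms(1)]]) (auto simp: fin_times_def)

lemma bounded_below_reflect_Mop: "fin_times t \<Longrightarrow> bounded_below (reflect (Mop (Lop f) v t))"
  by (rule bounded_below_reflect, rule Mop_eq_0) (auto simp: fin_times_def)

lemma v_eq_residue:
  assumes "fin_times t" "i \<ge> 1"
  shows "v (i + 1) t
    = - (Abs_fls (reflect (Mop (Lop f) v t)) * L_fls f t ^ i * fls_deriv (L_fls f t)) $$ (-1)"
proof -
  have "Abs_fls (reflect (Mop (Lop f) v t)) $$ j =
      (\<Sum>x\<in>insert (1,0) {x. t x \<noteq> 0 \<and> 2 \<le> fst x + snd x}.
        of_nat (fst x) * t x * (L_fls f t ^ (fst x - 1)) $$ j)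
      + infsum (\<lambda>k. v (k + 1) t * (inverse (L_fls f t) ^ (k + 1)) $$ j) {1..}" for j
    using Mop_nth[OF assms(1), where k = "- j"]
    by (simp add: Abs_fls_nth bounded_below_reflect_Mop[OF assms(1)] reflect_apply)
  from residue_extracts_inverse_power_coeff[OF L_fls_subdegree assms(2) this]
  show ?thesis
    by simp
qed

lemma v_flow:
  assumes laxL: "lax_eq (Lop f) Lh (Lop f)" and laxM: "lax_eq (Lop f) Lh (Mop (Lop f) v)"
    and canonical: "\<And>t. fin_times t \<Longrightarrow> pbr (Lop f) (Mop (Lop f) v) t = sone"
    and t: "fin_times t" and i: "i \<ge> 1" and mn: "m + n \<ge> 1"
  shows "((\<lambda>s. v (i + 1) (t((m,n) := s))) has_field_derivative
    sres (lmul (spow (Lop f t) i) (dp (Hop (Lop f) Lh m n t)))) (at (t (m,n)))"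
proof -
  let ?L = "Lop f" and ?M = "Mop (Lop f) v" and ?H = "Hop (Lop f) Lh m n"
  let ?T = "\<lambda>s. t((m,n) := s)" and ?E = "\<lambda>a. Abs_fls (reflect a)"
  define l where "l s = L_fls f (?T s)" for s
  define \<mu> where "\<mu> s = ?E (?M (?T s))" for s
  \<comment> \<open>\<open>(1, 0)\<close>: the Poisson bracket differentiates along \<open>z = t\<^sub>1\<^sub>0\<close>\<close>
  define K where "K = (\<Sum>x\<in>{x. t x \<noteq> 0} \<union> {(m,n), (1,0)}. int (fst x))"
  have M_line: "?M (t(y := s)) k = 0" if "y \<in> {(m,n), (1,0)}" "k > K" for y s k
    using that unfolding K_def by (intro Mop_upd_eq_0[OF t, where Y = "{(m,n), (1,0)}"]) auto
  have hl: "has_fls_derivative l (?E (pbr ?H ?L t)) (t (m,n))"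
    using lax_eq_has_fls_derivative[OF laxL t mn, of "-1" uminus]
    unfolding l_def L_fls_def reflect_def by (simp add: Lop_def)
  have hm: "has_fls_derivative \<mu> (?E (pbr ?H ?M t)) (t (m,n))"
    using lax_eq_has_fls_derivative[OF laxM t mn, of "- K" uminus] M_line
    unfolding \<mu>_def reflect_def by simp
  have H: "bounded_below (reflect (?H t))" "bounded_below (reflect (pdt (1,0) ?H t))"
    by (auto intro!: bounded_below_reflect[of m] pdt_eq_0 simp: Hop_Lop_eq_0)
  have L: "bounded_below (reflect (?L t))" "bounded_below (reflect (pdt (1,0) ?L t))"
    by (auto intro!: bounded_below_reflect[of 1] pdt_eq_0 simp: Lop_def)
  have M: "bounded_below (reflect (?M t))" "bounded_below (reflect (pdt (1,0) ?M t))"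
    using bounded_below_reflect_Mop[OF t] by (auto intro!: bounded_below_reflect[of K] pdt_eq_0 M_line)
  have "fls_deriv (l (t (m,n))) * ?E (pbr ?H ?M t) - fls_deriv (\<mu> (t (m,n))) * ?E (pbr ?H ?L t)
      = fls_deriv (?E (?H t))"
    using reflect_pbr_flow_identity[OF H L M canonical[OF t]] by (simp add: l_def \<mu>_def L_fls_def)
  from residue_power_times_deriv_flow[OF hl hm this, of i]
  have "((\<lambda>s. - (\<mu> s * l s ^ i * fls_deriv (l s)) $$ (-1)) has_field_derivative
      - (L_fls f t ^ i * fls_deriv (?E (?H t))) $$ (-1)) (at (t (m,n)))"
    by (auto intro: DERIV_minus simp: l_def)
  moreover have "sres (lmul (spow (?L t) i) (dp (?H t)))
      = - (L_fls f t ^ i * fls_deriv (?E (?H t))) $$ (-1)"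
    using sres_lmul_dp_reflect[of "spow (?L t) i" "?H t"] H(1) by (simp add: reflect_spow_Lop)
  ultimately show ?thesis
    using v_eq_residue[OF fin_times_upd[OF t] i] by (simp add: l_def \<mu>_def)
qed

section \<open>The operators \<open>Lh\<close> and \<open>Mh\<close>\<close>

definition Lh_fls :: "(tm \<Rightarrow> complex) \<Rightarrow> (int \<Rightarrow> tm \<Rightarrow> complex) \<Rightarrow> tm \<Rightarrow> complex fls" where
  "Lh_fls u g t = Abs_fls (Lhop u g t)"

lemma bounded_below_Lhop: "bounded_below (Lhop u g t)"
  unfolding bounded_below_def by (rule exI[of _ "-1"]) (simp add: Lhop_def)

lemma Lh_fls_nth: "Lh_fls u g t $$ k = Lhop u g t k"
  by (simp add: Lh_fls_def Abs_fls_nth bounded_below_Lhop)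

lemma Lh_fls_subdegree: "u t \<noteq> 0 \<Longrightarrow> fls_subdegree (Lh_fls u g t) = -1"
  by (rule fls_subdegree_eqI) (auto simp: Lh_fls_nth Lhop_def)

lemma spow_Lhop: "spow (Lhop u g t) j = fls_nth (Lh_fls u g t ^ j)"
  by (simp add: spow_eq_fls_power bounded_below_Lhop Lh_fls_def)

lemma spow_sinv_down_Lhop:
  assumes "u t \<noteq> 0"
  shows "spow (sinv_down (Lhop u g t)) j = fls_nth (inverse (Lh_fls u g t) ^ j)"
proof -
  have "Lh_fls u g t \<noteq> 0"
    using assms Lh_fls_subdegree[where u = u and t = t, OF assms, of g] by auto
  then show ?thesis
    by (simp add: sinv_down_eq_fls_inverse bounded_below_Lhop spow_eq_fls_power Lh_fls_def)
qed

lemma Hop_Lhop_eq_0: "k < - int n \<Longrightarrow> Hop L (Lhop u g) m n t k = 0"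
  unfolding Hop_def spos_def snonpos_def spow_Lhop
  by (simp add: fls_power_nth_eq_0_below[where a = "-1"] Lh_fls_nth Lhop_def)

lemma Mhop_nth:
  assumes "fin_times t" "u t \<noteq> 0"
  shows "Mhop (Lhop u g) vh t k =
    (\<Sum>x\<in>insert (0,1) {x. t x \<noteq> 0 \<and> 2 \<le> fst x + snd x}.
      of_nat (snd x) * t x * (Lh_fls u g t ^ (snd x - 1)) $$ k)
    + infsum (\<lambda>i. vh (i + 1) t * (inverse (Lh_fls u g t) ^ (i + 1)) $$ k) {1..}"
proof -
  let ?F = "{x. t x \<noteq> 0 \<and> 2 \<le> fst x + snd x}"
  have fin: "finite ?F"
    using assms(1) unfolding fin_times_def by (rule finite_subset[rotated]) auto
  have "infsum (\<lambda>(m,n). of_nat n * t (m,n) * spow (Lhop u g t) (n - 1) k) {(m,n). m + n \<ge> 2}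
      = infsum (\<lambda>x. of_nat (snd x) * t x * (Lh_fls u g t ^ (snd x - 1)) $$ k) ?F"
    by (rule infsum_cong_neutral) (auto simp: spow_Lhop)
  then show ?thesis
    using fin unfolding Mhop_def spow_sinv_down_Lhop[where u = u and t = t, OF assms(2)] by simp
qed

lemma Mhop_eq_0:
  assumes "fin_times t" "u t \<noteq> 0" "{x. t x \<noteq> 0} \<subseteq> S" "finite S" "k < - (\<Sum>x\<in>S. int (snd x))"
  shows "Mhop (Lhop u g) vh t k = 0"
  unfolding Mhop_nth[where u = u and t = t, OF assms(1,2)]
proof (rule inverse_power_expansion_nth_eq_0[OF Lh_fls_subdegree[where u = u and t = t, OF assms(2)]])
  show "0 \<le> (\<Sum>x\<in>S. int (snd x))"
    by (simp add: sum_nonneg)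
  show "int (snd a - 1) \<le> (\<Sum>x\<in>S. int (snd x))"
    if "a \<in> insert (0,1) {x. t x \<noteq> 0 \<and> 2 \<le> fst x + snd x}" for a
  proof -
    have "a = (0,1) \<or> a \<in> S"
      using that assms(3) by auto
    then show ?thesis
      using assms(4) member_le_sum[of a S "\<lambda>x. int (snd x)"] by (auto simp: sum_nonneg)
  qed
qed (use assms(5) in simp)

lemma Mhop_upd_eq_0:
  assumes "fin_times t" "u (t(y := s)) \<noteq> 0" "y \<in> Y" "finite Y"
    and "k < - (\<Sum>x\<in>{x. t x \<noteq> 0} \<union> Y. int (snd x))"
  shows "Mhop (Lhop u g) vh (t(y := s)) k = 0"
  using assms
  by (intro Mhop_eq_0[where u = u and t = "t(y := s)", OF fin_times_upd[OF assms(1)]])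
    (auto simp: fin_times_def)

lemma bounded_below_Mhop: "fin_times t \<Longrightarrow> u t \<noteq> 0 \<Longrightarrow> bounded_below (Mhop (Lhop u g) vh t)"
  unfolding bounded_below_def by (rule exI, intro allI impI, rule Mhop_eq_0) (auto simp: fin_times_def)

lemma vh_eq_residue:
  assumes "fin_times t" "u t \<noteq> 0" "i \<ge> 1"
  shows "vh (i + 1) t
    = - (Abs_fls (Mhop (Lhop u g) vh t) * Lh_fls u g t ^ i * fls_deriv (Lh_fls u g t)) $$ (-1)"
proof -
  have "Abs_fls (Mhop (Lhop u g) vh t) $$ j =
      (\<Sum>x\<in>insert (0,1) {x. t x \<noteq> 0 \<and> 2 \<le> fst x + snd x}.
        of_nat (snd x) * t x * (Lh_fls u g t ^ (snd x - 1)) $$ j)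
      + infsum (\<lambda>k. vh (k + 1) t * (inverse (Lh_fls u g t) ^ (k + 1)) $$ j) {1..}" for j
    using Mhop_nth[where u = u and t = t, OF assms(1,2), where k = j]
    by (simp add: Abs_fls_nth bounded_below_Mhop[where u = u and t = t, OF assms(1,2)])
  from residue_extracts_inverse_power_coeff[OF Lh_fls_subdegree[where u = u and t = t, OF assms(2)]
      assms(3) this]
  show ?thesis
    by simp
qed

lemma vh_flow:
  assumes u: "\<And>t. fin_times t \<Longrightarrow> u t \<noteq> 0"
    and laxL: "lax_eq L (Lhop u g) (Lhop u g)" and laxM: "lax_eq L (Lhop u g) (Mhop (Lhop u g) vh)"
    and canonical: "\<And>t. fin_times t \<Longrightarrow> pbr (Lhop u g) (Mhop (Lhop u g) vh) t = sone"
    and t: "fin_times t" and i: "i \<ge> 1" and mn: "m + n \<ge> 1"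
  shows "((\<lambda>s. vh (i + 1) (t((m,n) := s))) has_field_derivative
    - sres (lmul (spow (Lhop u g t) i) (dp (Hop L (Lhop u g) m n t)))) (at (t (m,n)))"
proof -
  let ?L = "Lhop u g" and ?M = "Mhop (Lhop u g) vh" and ?H = "Hop L (Lhop u g) m n"
  let ?T = "\<lambda>s. t((m,n) := s)"
  define l where "l s = Lh_fls u g (?T s)" for s
  define \<mu> where "\<mu> s = Abs_fls (?M (?T s))" for s
  define K where "K = (\<Sum>x\<in>{x. t x \<noteq> 0} \<union> {(m,n), (1,0)}. int (snd x))"
  have M_line: "?M (t(y := s)) k = 0" if "y \<in> {(m,n), (1,0)}" "k < - K" for y s k
    using that fin_times_upd[OF t] unfolding K_def
    by (intro Mhop_upd_eq_0[OF t, where Y = "{(m,n), (1,0)}"] u) auto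
  have hl: "has_fls_derivative l (Abs_fls (pbr ?H ?L t)) (t (m,n))"
    using lax_eq_has_fls_derivative[OF laxL t mn, of "-1" "\<lambda>k. k"]
    unfolding l_def Lh_fls_def by (simp add: Lhop_def)
  have hm: "has_fls_derivative \<mu> (Abs_fls (pbr ?H ?M t)) (t (m,n))"
    using lax_eq_has_fls_derivative[OF laxM t mn, of "- K" "\<lambda>k. k"] M_line
    unfolding \<mu>_def by simp
  have H: "bounded_below (?H t)" "bounded_below (pdt (1,0) ?H t)"
    unfolding bounded_below_def by (auto intro!: exI[of _ "- int n"] pdt_eq_0 simp: Hop_Lhop_eq_0)
  have L: "bounded_below (?L t)" "bounded_below (pdt (1,0) ?L t)"
    unfolding bounded_below_def by (auto intro!: exI[of _ "-1"] pdt_eq_0 simp: Lhop_def)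
  have M: "bounded_below (?M t)" "bounded_below (pdt (1,0) ?M t)"
    using bounded_below_Mhop[where u = u and t = t, OF t u[OF t]]
    unfolding bounded_below_def by (auto intro!: exI[of _ "- K"] pdt_eq_0 M_line)
  have "fls_deriv (l (t (m,n))) * Abs_fls (pbr ?H ?M t) - fls_deriv (\<mu> (t (m,n))) * Abs_fls (pbr ?H ?L t)
      = fls_deriv (Abs_fls (?H t))"
    using pbr_flow_identity[OF H L M canonical[OF t]] by (simp add: l_def \<mu>_def Lh_fls_def)
  from residue_power_times_deriv_flow[OF hl hm this, of i]
  have "((\<lambda>s. - (\<mu> s * l s ^ i * fls_deriv (l s)) $$ (-1)) has_field_derivative
      - (Lh_fls u g t ^ i * fls_deriv (Abs_fls (?H t))) $$ (-1)) (at (t (m,n)))"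
    by (auto intro: DERIV_minus simp: l_def)
  moreover have "sres (lmul (spow (?L t) i) (dp (?H t)))
      = (Lh_fls u g t ^ i * fls_deriv (Abs_fls (?H t))) $$ (-1)"
    using sres_lmul_dp[of "spow (?L t) i" "?H t"] H(1) by (simp add: spow_Lhop)
  ultimately show ?thesis
    using vh_eq_residue[where u = u and t = "?T _", OF fin_times_upd[OF t] u[OF fin_times_upd[OF t]] i]
    by (simp add: l_def \<mu>_def)
qed

theorem proposition1:
  fixes f g :: "int \<Rightarrow> tm \<Rightarrow> complex" and u :: "tm \<Rightarrow> complex"
    and v vh :: "nat \<Rightarrow> tm \<Rightarrow> complex"
  defines "L \<equiv> Lop f" and "Lh \<equiv> Lhop u g"
      and "M \<equiv> Mop (Lop f) v" and "Mh \<equiv> Mhop (Lhop u g) vh"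
  assumes u_nz: "\<And>t. fin_times t \<Longrightarrow> u t \<noteq> 0"
    and laxL: "lax_eq L Lh L" and laxM: "lax_eq L Lh M"
    and laxLh: "lax_eq L Lh Lh" and laxMh: "lax_eq L Lh Mh"
    and canL: "\<And>t. fin_times t \<Longrightarrow> pbr L M t = sone"
    and canLh: "\<And>t. fin_times t \<Longrightarrow> pbr Lh Mh t = sone"
  shows "\<forall>t i m n. fin_times t \<longrightarrow> i \<ge> 1 \<longrightarrow> m + n \<ge> 1 \<longrightarrow>
      ((\<lambda>s. vh (i + 1) (t((m,n) := s))) has_field_derivative
          - sres (lmul (spow (Lh t) i) (dp (Hop L Lh m n t)))) (at (t (m,n)))
    \<and> ((\<lambda>s. v (i + 1) (t((m,n) := s))) has_field_derivative
          sres (lmul (spow (L t) i) (dp (Hop L Lh m n t)))) (at (t (m,n)))"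
proof (intro allI impI conjI)
  fix t :: tm and i m n :: nat
  assume t: "fin_times t" and i: "i \<ge> 1" and mn: "m + n \<ge> 1"
  show "((\<lambda>s. vh (i + 1) (t((m,n) := s))) has_field_derivative
      - sres (lmul (spow (Lh t) i) (dp (Hop L Lh m n t)))) (at (t (m,n)))"
    using vh_flow[OF u_nz laxLh[unfolded Lh_def] laxMh[unfolded Lh_def Mh_def]
        canLh[unfolded Lh_def Mh_def] t i mn]
    unfolding Lh_def .
  show "((\<lambda>s. v (i + 1) (t((m,n) := s))) has_field_derivative
      sres (lmul (spow (L t) i) (dp (Hop L Lh m n t)))) (at (t (m,n)))"
    using v_flow[OF laxL[unfolded L_def] laxM[unfolded L_def M_def] canL[unfolded L_def M_def] t i mn]
    unfolding L_def .
qed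

end
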